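(* Let $d\ge2$, $\varphi\in L^\infty(\mathbb{T}^d)$, and let $C$ be a conjugation on $H^2(\mathbb{D}^d)$. If $T_\varphi$ is $C$-symmetric, then $T_\varphi$ is $\bm{S}$-Toeplitz for $\bm{S}=(CM_{z_1}C,\dots,CM_{z_d}C)$, i.e. $(CM_{z_i}C)^*T_\varphi(CM_{z_i}C)=T_\varphi$ for all $i=1,\dots,d$.
   Context: A conjugation is an anti-linear, involutive, isometric map; $T$ is $C$-symmetric if $CT^*C=T$. $H^2(\mathbb{D}^d)$ is the Hardy space over the unit polydisc (as a closed subspace of $L^2(\mathbb{T}^d)$), $M_{z_i}$ is multiplication by the coordinate $z_i$, and $T_\varphi f=P_{H^2(\mathbb{D}^d)}(\varphi f)$ for $\varphi\in L^\infty(\mathbb{T}^d)$. *)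

theory Defs
  imports "HOL-Analysis.Analysis"
begin

text \<open>Model of the torus T^d: the unit cube [0,1]^d (coordinates t, z_j = exp(2 pi i t_j)),
  with Lebesgue measure (total mass 1 = normalized Haar measure on T^d).\<close>

definition torus_cube :: "(real^'d::finite) set" where
  "torus_cube = {t. \<forall>j. 0 \<le> t$j \<and> t$j \<le> 1}"

definition torus_measure :: "(real^'d::finite) measure" where
  "torus_measure = lebesgue_on torus_cube"

definition Linfty :: "((real^'d::finite) \<Rightarrow> complex) \<Rightarrow> bool" where
  "Linfty \<phi> \<longleftrightarrow> \<phi> \<in> borel_measurable torus_measure \<and>
     (\<exists>B. AE t in torus_measure. cmod (\<phi> t) \<le> B)"

definition fourier_coeff :: "((real^'d::finite) \<Rightarrow> complex) \<Rightarrow> int^'d \<Rightarrow> complex" where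
  "fourier_coeff \<phi> k = integral\<^sup>L torus_measure
     (\<lambda>t. \<phi> t * exp (- (2 * of_real pi * \<i>) * of_real (\<Sum>j\<in>UNIV. of_int (k$j) * t$j)))"

text \<open>H^2(D^d), identified (via the unitary Fourier transform) with the square-summable
  coefficient sequences indexed by N^d, i.e. the closed subspace of L^2(T^d) = l^2(Z^d)
  consisting of functions whose Fourier coefficients vanish off N^d.\<close>
definition hardy :: "((nat^'d::finite) \<Rightarrow> complex) set" where
  "hardy = {f. (\<lambda>n. (cmod (f n))\<^sup>2) summable_on UNIV}"

definition h2_inner :: "((nat^'d::finite) \<Rightarrow> complex) \<Rightarrow> ((nat^'d) \<Rightarrow> complex) \<Rightarrow> complex" where
  "h2_inner f g = (\<Sum>\<^sub>\<infinity>n. f n * cnj (g n))"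

definition h2_norm :: "((nat^'d::finite) \<Rightarrow> complex) \<Rightarrow> real" where
  "h2_norm f = sqrt (\<Sum>\<^sub>\<infinity>n. (cmod (f n))\<^sup>2)"

text \<open>Multiplication by the coordinate z_i on H^2: shifts coefficients by e_i.\<close>
definition mult_z :: "'d::finite \<Rightarrow> ((nat^'d) \<Rightarrow> complex) \<Rightarrow> ((nat^'d) \<Rightarrow> complex)" where
  "mult_z i f = (\<lambda>n. if n$i = 0 then 0 else f (\<chi> j. if j = i then n$j - 1 else n$j))"

text \<open>Toeplitz operator T_phi f = P_{H^2}(phi f): the n-th coefficient (n in N^d) of phi f
  is sum over m of phi^(n - m) f^(m).\<close>
definition toeplitz :: "((real^'d::finite) \<Rightarrow> complex) \<Rightarrow> ((nat^'d) \<Rightarrow> complex) \<Rightarrow> ((nat^'d) \<Rightarrow> complex)" where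
  "toeplitz \<phi> f = (\<lambda>n. \<Sum>\<^sub>\<infinity>m. fourier_coeff \<phi> (\<chi> j. int (n$j) - int (m$j)) * f m)"

definition conjugation :: "(((nat^'d::finite) \<Rightarrow> complex) \<Rightarrow> ((nat^'d) \<Rightarrow> complex)) \<Rightarrow> bool" where
  "conjugation C \<longleftrightarrow>
     (\<forall>f\<in>hardy. C f \<in> hardy) \<and>
     (\<forall>f\<in>hardy. \<forall>g\<in>hardy. C (\<lambda>n. f n + g n) = (\<lambda>n. C f n + C g n)) \<and>
     (\<forall>f\<in>hardy. \<forall>c. C (\<lambda>n. c * f n) = (\<lambda>n. cnj c * C f n)) \<and>
     (\<forall>f\<in>hardy. C (C f) = f) \<and>
     (\<forall>f\<in>hardy. h2_norm (C f) = h2_norm f)"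

definition is_adjoint :: "(((nat^'d::finite) \<Rightarrow> complex) \<Rightarrow> ((nat^'d) \<Rightarrow> complex)) \<Rightarrow>
    (((nat^'d) \<Rightarrow> complex) \<Rightarrow> ((nat^'d) \<Rightarrow> complex)) \<Rightarrow> bool" where
  "is_adjoint A B \<longleftrightarrow> (\<forall>f\<in>hardy. A f \<in> hardy) \<and> (\<forall>f\<in>hardy. B f \<in> hardy) \<and>
     (\<forall>f\<in>hardy. \<forall>g\<in>hardy. h2_inner (A f) g = h2_inner f (B g))"

definition C_symmetric :: "(((nat^'d::finite) \<Rightarrow> complex) \<Rightarrow> ((nat^'d) \<Rightarrow> complex)) \<Rightarrow>
    (((nat^'d) \<Rightarrow> complex) \<Rightarrow> ((nat^'d) \<Rightarrow> complex)) \<Rightarrow> bool" where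
  "C_symmetric C T \<longleftrightarrow> (\<exists>T'. is_adjoint T T' \<and> (\<forall>f\<in>hardy. C (T' (C f)) = T f))"

end

theory Submission
  imports Defs
begin

text \<open>
  Write \<open>M\<^sub>i\<close> for multiplication by \<open>z\<^sub>i\<close>, \<open>M\<^sub>i\<^sup>*\<close> for its adjoint, the backward shift, and
  \<open>T = T\<^sub>\<phi>\<close>. A conjugation satisfies \<open>\<langle>Cf, Cg\<rangle> = \<langle>g, f\<rangle>\<close>, so \<open>CM\<^sub>iC\<close> has adjoint \<open>CM\<^sub>i\<^sup>*C\<close>, and
  \<open>C\<close>-symmetry means \<open>CT = T\<^sup>*C\<close>. Hence
  \<open>(CM\<^sub>iC)\<^sup>* T (CM\<^sub>iC) = C M\<^sub>i\<^sup>* T\<^sup>* M\<^sub>i C = C T\<^sup>* C = T\<close>,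
  where the middle step is the adjoint of the Toeplitz identity \<open>M\<^sub>i\<^sup>* T M\<^sub>i = T\<close>.
\<close>

lemma hardy_iff: "f \<in> hardy \<longleftrightarrow> (\<lambda>n. (cmod (f n))\<^sup>2) summable_on UNIV"
  by (simp add: hardy_def)

lemma summable_on_h2_inner:
  assumes "f \<in> hardy" "g \<in> hardy"
  shows "(\<lambda>n. f n * cnj (g n)) summable_on UNIV"
proof -
  have "(\<lambda>n. (cmod (f n))\<^sup>2 + (cmod (g n))\<^sup>2) summable_on UNIV"
    using assms by (intro summable_on_add) (auto simp: hardy_iff)
  then have "(\<lambda>n. norm (f n * cnj (g n))) summable_on UNIV"
  proof (rule summable_on_comparison_test)
    fix n
    have "cmod (f n) * cmod (g n) \<le> (cmod (f n))\<^sup>2 + (cmod (g n))\<^sup>2"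
      using sum_squares_bound[of "cmod (f n)" "cmod (g n)"]
        mult_nonneg_nonneg[OF norm_ge_zero norm_ge_zero, of "f n" "g n"] by linarith
    then show "norm (f n * cnj (g n)) \<le> (cmod (f n))\<^sup>2 + (cmod (g n))\<^sup>2"
      by (simp add: norm_mult)
  qed simp
  then show ?thesis
    using summable_on_iff_abs_summable_on_complex by blast
qed

lemma hardy_add:
  assumes "f \<in> hardy" "g \<in> hardy"
  shows "(\<lambda>n. f n + g n) \<in> hardy"
  unfolding hardy_iff
proof (rule summable_on_comparison_test)
  show "(\<lambda>n. 2 * (cmod (f n))\<^sup>2 + 2 * (cmod (g n))\<^sup>2) summable_on UNIV"
    using assms by (intro summable_on_add summable_on_cmult_right) (auto simp: hardy_iff)
  fix n
  have "(cmod (f n + g n))\<^sup>2 \<le> (cmod (f n) + cmod (g n))\<^sup>2"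
    by (simp add: norm_triangle_ineq power_mono)
  also have "\<dots> \<le> 2 * (cmod (f n))\<^sup>2 + 2 * (cmod (g n))\<^sup>2"
    using sum_squares_bound[of "cmod (f n)" "cmod (g n)"] unfolding power2_sum by linarith
  finally show "(cmod (f n + g n))\<^sup>2 \<le> 2 * (cmod (f n))\<^sup>2 + 2 * (cmod (g n))\<^sup>2" .
qed simp

lemma hardy_scale:
  assumes "f \<in> hardy"
  shows "(\<lambda>n. c * f n) \<in> hardy"
  using summable_on_cmult_right[of "\<lambda>n. (cmod (f n))\<^sup>2" UNIV "(cmod c)\<^sup>2"] assms
  by (simp add: hardy_iff norm_mult power_mult_distrib)

lemma h2_norm_power2: "(h2_norm f)\<^sup>2 = (\<Sum>\<^sub>\<infinity>n. (cmod (f n))\<^sup>2)"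
  unfolding h2_norm_def by (simp add: infsum_nonneg)

lemma h2_norm_add_power2:
  assumes "f \<in> hardy" "g \<in> hardy"
  shows "(h2_norm (\<lambda>n. f n + g n))\<^sup>2 = (h2_norm f)\<^sup>2 + (h2_norm g)\<^sup>2 + 2 * Re (h2_inner f g)"
proof -
  have pointwise: "(cmod (f n + g n))\<^sup>2 = (cmod (f n))\<^sup>2 + (cmod (g n))\<^sup>2 + 2 * Re (f n * cnj (g n))"
    for n
    by (simp only: cmod_power2 plus_complex.sel) (simp add: power2_sum)
  have f: "(\<lambda>n. (cmod (f n))\<^sup>2) summable_on UNIV" and g: "(\<lambda>n. (cmod (g n))\<^sup>2) summable_on UNIV"
    using assms by (auto simp: hardy_iff)
  have fg: "(\<lambda>n. Re (f n * cnj (g n))) summable_on UNIV"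
    by (rule summable_on_Re[OF summable_on_h2_inner[OF assms]])
  have "(\<Sum>\<^sub>\<infinity>n. (cmod (f n + g n))\<^sup>2)
      = (\<Sum>\<^sub>\<infinity>n. (cmod (f n))\<^sup>2 + (cmod (g n))\<^sup>2) + (\<Sum>\<^sub>\<infinity>n. 2 * Re (f n * cnj (g n)))"
    unfolding pointwise
    by (rule infsum_add[OF summable_on_add[OF f g] summable_on_cmult_right[OF fg]])
  also have "\<dots> = (\<Sum>\<^sub>\<infinity>n. (cmod (f n))\<^sup>2) + (\<Sum>\<^sub>\<infinity>n. (cmod (g n))\<^sup>2)
      + 2 * (\<Sum>\<^sub>\<infinity>n. Re (f n * cnj (g n)))"
    by (simp only: infsum_add[OF f g] infsum_cmult_right')
  also have "(\<Sum>\<^sub>\<infinity>n. Re (f n * cnj (g n))) = Re (h2_inner f g)"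
    unfolding h2_inner_def by (rule infsum_Re[OF summable_on_h2_inner[OF assms]])
  finally show ?thesis
    by (simp add: h2_norm_power2)
qed

lemma h2_inner_scale_left: "h2_inner (\<lambda>n. c * f n) g = c * h2_inner f g"
  unfolding h2_inner_def by (simp add: mult.assoc infsum_cmult_right')

lemma h2_inner_cnj_commute: "h2_inner f g = cnj (h2_inner g f)"
  unfolding h2_inner_def by (simp flip: infsum_cnj add: mult.commute)

lemma conjugation_Re_h2_inner:
  assumes C: "conjugation C" and f: "f \<in> hardy" and g: "g \<in> hardy"
  shows "Re (h2_inner (C f) (C g)) = Re (h2_inner f g)"
proof -
  have "h2_norm (C (\<lambda>n. f n + g n)) = h2_norm (\<lambda>n. f n + g n)"
    using C hardy_add[OF f g] by (auto simp: conjugation_def)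
  moreover have "C (\<lambda>n. f n + g n) = (\<lambda>n. C f n + C g n)"
    and "h2_norm (C f) = h2_norm f" "h2_norm (C g) = h2_norm g"
    and "C f \<in> hardy" "C g \<in> hardy"
    using C f g by (auto simp: conjugation_def)
  ultimately show ?thesis
    using h2_norm_add_power2[OF f g] h2_norm_add_power2[of "C f" "C g"] by simp
qed

text \<open>Polarization: the real part is preserved, and testing with \<open>i f\<close> recovers the imaginary part.\<close>

lemma conjugation_h2_inner:
  assumes C: "conjugation C" and f: "f \<in> hardy" and g: "g \<in> hardy"
  shows "h2_inner (C f) (C g) = h2_inner g f"
proof -
  have "C (\<lambda>n. \<i> * f n) = (\<lambda>n. - \<i> * C f n)"
    using C f by (auto simp: conjugation_def)
  then have "Re (h2_inner (\<lambda>n. - \<i> * C f n) (C g)) = Re (h2_inner (\<lambda>n. \<i> * f n) g)"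
    using conjugation_Re_h2_inner[OF C hardy_scale[OF f, of \<i>] g] by simp
  then have "Im (h2_inner (C f) (C g)) = - Im (h2_inner f g)"
    by (simp only: h2_inner_scale_left) simp
  with conjugation_Re_h2_inner[OF C f g] have "h2_inner (C f) (C g) = cnj (h2_inner f g)"
    by (simp add: complex_eq_iff)
  then show ?thesis
    by (metis h2_inner_cnj_commute)
qed

lemma h2_inner_indicator: "h2_inner u (\<lambda>m. if m = n then 1 else 0) = u n"
proof -
  have "h2_inner u (\<lambda>m. if m = n then 1 else 0) = (\<Sum>\<^sub>\<infinity>m\<in>{n}. u m * cnj (if m = n then 1 else 0))"
    unfolding h2_inner_def by (rule infsum_cong_neutral) auto
  then show ?thesis
    by simp
qed

lemma hardy_indicator: "(\<lambda>m. if m = n then 1 else 0) \<in> hardy"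
proof -
  have "(\<lambda>m. (cmod (if m = n then 1 else 0 :: complex))\<^sup>2) summable_on {n}"
    by simp
  then show ?thesis
    unfolding hardy_iff by (rule summable_on_cong_neutral[THEN iffD2, rotated -1]) auto
qed

lemma h2_inner_eq_imp_eq:
  assumes "\<And>h. h \<in> hardy \<Longrightarrow> h2_inner u h = h2_inner v h"
  shows "u = v"
proof
  fix n
  show "u n = v n"
    using assms[OF hardy_indicator[of n]] by (simp add: h2_inner_indicator)
qed

lemma is_adjoint_h2_inner:
  assumes "is_adjoint A B" "f \<in> hardy" "g \<in> hardy"
  shows "h2_inner (A f) g = h2_inner f (B g)"
  using assms unfolding is_adjoint_def by blast

lemma is_adjoint_h2_inner_left:
  assumes "is_adjoint A B" "f \<in> hardy" "g \<in> hardy"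
  shows "h2_inner (B g) f = h2_inner g (A f)"
proof -
  have "h2_inner (B g) f = cnj (h2_inner f (B g))"
    by (rule h2_inner_cnj_commute)
  also have "\<dots> = cnj (h2_inner (A f) g)"
    by (simp only: is_adjoint_h2_inner[OF assms])
  also have "\<dots> = h2_inner g (A f)"
    by (rule h2_inner_cnj_commute[symmetric])
  finally show ?thesis .
qed

lemma is_adjoint_conjugation:
  fixes A B :: "((nat^'d::finite) \<Rightarrow> complex) \<Rightarrow> (nat^'d) \<Rightarrow> complex"
  assumes C: "conjugation C" and adj: "is_adjoint A B"
  shows "is_adjoint (\<lambda>f. C (A (C f))) (\<lambda>g. C (B (C g)))"
  unfolding is_adjoint_def
proof (intro conjI ballI)
  have Ch: "\<And>f. f \<in> hardy \<Longrightarrow> C f \<in> hardy" and CC: "\<And>f. f \<in> hardy \<Longrightarrow> C (C f) = f"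
    using C by (auto simp: conjugation_def)
  have Ah: "\<And>f. f \<in> hardy \<Longrightarrow> A f \<in> hardy" and Bh: "\<And>f. f \<in> hardy \<Longrightarrow> B f \<in> hardy"
    using adj by (auto simp: is_adjoint_def)
  fix f :: "(nat^'d) \<Rightarrow> complex"
  assume f: "f \<in> hardy"
  show "C (A (C f)) \<in> hardy" "C (B (C f)) \<in> hardy"
    by (simp_all add: Ch Ah Bh f)
  fix g :: "(nat^'d) \<Rightarrow> complex"
  assume g: "g \<in> hardy"
  have "h2_inner (C (A (C f))) g = h2_inner (C (A (C f))) (C (C g))"
    by (simp add: CC g)
  also have "\<dots> = h2_inner (C g) (A (C f))"
    by (simp add: conjugation_h2_inner C Ch Ah f g)
  also have "\<dots> = h2_inner (B (C g)) (C f)"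
    by (simp add: is_adjoint_h2_inner_left[OF adj] Ch f g)
  also have "\<dots> = h2_inner (C (C f)) (C (B (C g)))"
    by (simp add: conjugation_h2_inner C Ch Bh f g)
  also have "\<dots> = h2_inner f (C (B (C g)))"
    by (simp add: CC f)
  finally show "h2_inner (C (A (C f))) g = h2_inner f (C (B (C g)))" .
qed

lemma is_adjoint_compression_invariant:
  fixes T :: "((nat^'d::finite) \<Rightarrow> complex) \<Rightarrow> (nat^'d) \<Rightarrow> complex"
  assumes adj_T: "is_adjoint T T'" and adj_M: "is_adjoint M M'"
    and invariant: "\<And>f. f \<in> hardy \<Longrightarrow> M' (T (M f)) = T f"
    and g: "g \<in> hardy"
  shows "M' (T' (M g)) = T' g"
proof (rule h2_inner_eq_imp_eq)
  have Mh: "\<And>f. f \<in> hardy \<Longrightarrow> M f \<in> hardy"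
    and Th: "\<And>f. f \<in> hardy \<Longrightarrow> T f \<in> hardy" and T'h: "\<And>f. f \<in> hardy \<Longrightarrow> T' f \<in> hardy"
    using adj_T adj_M by (auto simp: is_adjoint_def)
  fix h :: "(nat^'d) \<Rightarrow> complex"
  assume h: "h \<in> hardy"
  have "h2_inner (M' (T' (M g))) h = h2_inner (T' (M g)) (M h)"
    by (rule is_adjoint_h2_inner_left[OF adj_M h T'h[OF Mh[OF g]]])
  also have "\<dots> = cnj (h2_inner (M h) (T' (M g)))"
    by (rule h2_inner_cnj_commute)
  also have "\<dots> = cnj (h2_inner (T (M h)) (M g))"
    by (simp only: is_adjoint_h2_inner[OF adj_T Mh[OF h] Mh[OF g]])
  also have "\<dots> = cnj (h2_inner (M' (T (M h))) g)"
    by (simp only: is_adjoint_h2_inner_left[OF adj_M g Th[OF Mh[OF h]]])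
  also have "\<dots> = cnj (h2_inner h (T' g))"
    by (simp only: invariant[OF h] is_adjoint_h2_inner[OF adj_T h g])
  also have "\<dots> = h2_inner (T' g) h"
    by (rule h2_inner_cnj_commute[symmetric])
  finally show "h2_inner (M' (T' (M g))) h = h2_inner (T' g) h" .
qed

lemma C_symmetric_compression_invariant:
  assumes C: "conjugation C" and sym: "C_symmetric C T"
    and adj_M: "is_adjoint M M'"
    and invariant: "\<And>f. f \<in> hardy \<Longrightarrow> M' (T (M f)) = T f"
    and f: "f \<in> hardy"
  shows "C (M' (C (T (C (M (C f)))))) = T f"
proof -
  have Ch: "\<And>f. f \<in> hardy \<Longrightarrow> C f \<in> hardy" and CC: "\<And>f. f \<in> hardy \<Longrightarrow> C (C f) = f"
    using C by (auto simp: conjugation_def)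
  obtain T' where adj_T: "is_adjoint T T'" and CT'C: "\<And>f. f \<in> hardy \<Longrightarrow> C (T' (C f)) = T f"
    using sym unfolding C_symmetric_def by blast
  have T'h: "\<And>f. f \<in> hardy \<Longrightarrow> T' f \<in> hardy" and Mh: "\<And>f. f \<in> hardy \<Longrightarrow> M f \<in> hardy"
    using adj_T adj_M by (auto simp: is_adjoint_def)
  have CT: "C (T g) = T' (C g)" if g: "g \<in> hardy" for g
  proof -
    have "C (T g) = C (C (T' (C g)))"
      by (simp only: CT'C[OF g])
    also have "\<dots> = T' (C g)"
      by (rule CC) (simp add: T'h Ch g)
    finally show ?thesis .
  qed
  have "C (T (C (M (C f)))) = T' (C (C (M (C f))))"
    by (rule CT) (simp add: Ch Mh f)
  also have "\<dots> = T' (M (C f))"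
    by (simp only: CC[OF Mh[OF Ch[OF f]]])
  finally have CTC: "C (T (C (M (C f)))) = T' (M (C f))" .
  have "C (M' (C (T (C (M (C f)))))) = C (M' (T' (M (C f))))"
    by (simp only: CTC)
  also have "\<dots> = C (T' (C f))"
    by (simp add: is_adjoint_compression_invariant[OF adj_T adj_M invariant Ch[OF f]])
  also have "\<dots> = T f"
    by (rule CT'C[OF f])
  finally show ?thesis .
qed

definition shift_index :: "'d::finite \<Rightarrow> nat^'d \<Rightarrow> nat^'d" where
  "shift_index i n = (\<chi> j. if j = i then n$j + 1 else n$j)"

definition backward_shift :: "'d::finite \<Rightarrow> ((nat^'d) \<Rightarrow> complex) \<Rightarrow> ((nat^'d) \<Rightarrow> complex)" where
  "backward_shift i g = (\<lambda>n. g (shift_index i n))"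

lemma inj_shift_index: "inj (shift_index i)"
  by (auto simp: inj_def shift_index_def vec_eq_iff split: if_splits)

lemma range_shift_index: "range (shift_index i) = {m. m$i \<noteq> 0}"
proof (intro set_eqI iffI)
  fix m :: "nat^'a" assume "m \<in> {m. m$i \<noteq> 0}"
  then have "m = shift_index i (\<chi> j. if j = i then m$j - 1 else m$j)"
    by (auto simp: shift_index_def vec_eq_iff)
  then show "m \<in> range (shift_index i)"
    by blast
qed (auto simp: shift_index_def)

lemma mult_z_shift_index: "mult_z i f (shift_index i n) = f n"
proof -
  have "(\<chi> j. if j = i then shift_index i n $ j - 1 else shift_index i n $ j) = n"
    by (simp add: shift_index_def vec_eq_iff)
  moreover have "shift_index i n $ i \<noteq> 0"
    by (simp add: shift_index_def)
  ultimately show ?thesis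
    unfolding mult_z_def by simp
qed

lemma mult_z_eq_0: "m$i = 0 \<Longrightarrow> mult_z i f m = 0"
  by (simp add: mult_z_def)

lemma infsum_reindex_shift_index:
  assumes "\<And>m. m$i = 0 \<Longrightarrow> F m = 0"
  shows "infsum F UNIV = (\<Sum>\<^sub>\<infinity>n. F (shift_index i n))"
proof -
  have "infsum F UNIV = infsum F (range (shift_index i))"
    by (rule infsum_cong_neutral) (use assms in \<open>auto simp: range_shift_index\<close>)
  also have "\<dots> = infsum (F \<circ> shift_index i) UNIV"
    by (rule infsum_reindex) (simp add: inj_shift_index)
  finally show ?thesis
    by (simp add: o_def)
qed

lemma summable_on_reindex_shift_index:
  assumes "\<And>m. m$i = 0 \<Longrightarrow> F m = 0"
  shows "F summable_on UNIV \<longleftrightarrow> (\<lambda>n. F (shift_index i n)) summable_on UNIV"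
proof -
  have "F summable_on UNIV \<longleftrightarrow> F summable_on (range (shift_index i))"
    by (rule summable_on_cong_neutral) (use assms in \<open>auto simp: range_shift_index\<close>)
  also have "\<dots> \<longleftrightarrow> (F \<circ> shift_index i) summable_on UNIV"
    by (rule summable_on_reindex) (simp add: inj_shift_index)
  finally show ?thesis
    by (simp add: o_def)
qed

lemma hardy_mult_z: "f \<in> hardy \<Longrightarrow> mult_z i f \<in> hardy"
  unfolding hardy_iff
  by (subst summable_on_reindex_shift_index[of i]) (auto simp: mult_z_eq_0 mult_z_shift_index)

lemma hardy_backward_shift:
  assumes "g \<in> hardy"
  shows "backward_shift i g \<in> hardy"
proof -
  have "(\<lambda>n. (cmod (g n))\<^sup>2) summable_on range (shift_index i)"
    by (rule summable_on_subset[of _ UNIV]) (use assms in \<open>auto simp: hardy_iff\<close>)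
  then have "((\<lambda>n. (cmod (g n))\<^sup>2) \<circ> shift_index i) summable_on UNIV"
    by (subst summable_on_reindex[symmetric]) (simp_all add: inj_shift_index)
  then show ?thesis
    by (simp add: hardy_iff backward_shift_def o_def)
qed

lemma h2_inner_backward_shift: "h2_inner (backward_shift i g) f = h2_inner g (mult_z i f)"
  unfolding h2_inner_def backward_shift_def
  by (subst infsum_reindex_shift_index[of i]) (auto simp: mult_z_eq_0 mult_z_shift_index)

lemma is_adjoint_mult_z: "is_adjoint (mult_z i) (backward_shift i)"
  unfolding is_adjoint_def
proof (intro conjI ballI)
  fix f g :: "(nat^'a) \<Rightarrow> complex"
  have "h2_inner (mult_z i f) g = cnj (h2_inner (backward_shift i g) f)"
    by (simp only: h2_inner_backward_shift flip: h2_inner_cnj_commute)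
  then show "h2_inner (mult_z i f) g = h2_inner f (backward_shift i g)"
    by (simp only: h2_inner_cnj_commute[of f])
qed (simp_all add: hardy_mult_z hardy_backward_shift)

lemma backward_shift_toeplitz_mult_z: "backward_shift i (toeplitz \<phi> (mult_z i f)) = toeplitz \<phi> f"
proof
  fix n
  have shift_diff: "(\<chi> j. int (shift_index i n $ j) - int (shift_index i m $ j)) = (\<chi> j. int (n $ j) - int (m $ j))"
    for m
    by (auto simp: shift_index_def vec_eq_iff)
  show "backward_shift i (toeplitz \<phi> (mult_z i f)) n = toeplitz \<phi> f n"
    unfolding backward_shift_def toeplitz_def
    by (subst infsum_reindex_shift_index[of i]) (auto simp: mult_z_eq_0 mult_z_shift_index shift_diff)
qed

theorem proposition7p4:
  fixes \<phi> :: "(real^'d::finite) \<Rightarrow> complex"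
    and C :: "((nat^'d) \<Rightarrow> complex) \<Rightarrow> ((nat^'d) \<Rightarrow> complex)"
  assumes "CARD('d) \<ge> 2"
    and "Linfty \<phi>"
    and "conjugation C"
    and "C_symmetric C (toeplitz \<phi>)"
  shows "\<forall>i::'d. \<exists>S'. is_adjoint (\<lambda>f. C (mult_z i (C f))) S' \<and>
           (\<forall>f\<in>hardy. S' (toeplitz \<phi> (C (mult_z i (C f)))) = toeplitz \<phi> f)"
proof
  fix i :: 'd
  let ?S' = "\<lambda>g. C (backward_shift i (C g))"
  have "is_adjoint (\<lambda>f. C (mult_z i (C f))) ?S'"
    using is_adjoint_conjugation[OF assms(3) is_adjoint_mult_z[of i]] .
  moreover have "?S' (toeplitz \<phi> (C (mult_z i (C f)))) = toeplitz \<phi> f" if "f \<in> hardy" for f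
    by (rule C_symmetric_compression_invariant[OF assms(3,4) is_adjoint_mult_z _ that])
      (rule backward_shift_toeplitz_mult_z)
  ultimately show "\<exists>S'. is_adjoint (\<lambda>f. C (mult_z i (C f))) S' \<and>
      (\<forall>f\<in>hardy. S' (toeplitz \<phi> (C (mult_z i (C f)))) = toeplitz \<phi> f)"
    by (intro exI[of _ ?S']) blast
qed

end
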